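(* Assume the setting and standing assumptions (A1), (A2) described in the context. If there exists $\Delta \in \mathcal{D}$ for which the system exhibits microphase separation, then $\Psi^+$ is initially positive, i.e. there exists $\hat\kappa>0$ such that $\Psi^+(\kappa)>0$ for all $\kappa\in(0,\hat\kappa)$.
   Context: Let $n,m\ge 1$, $B\in\mathbb{Z}^{n\times m}$, $C\in\mathbb{Z}^{m\times n}$. Given bounds $0\le \Delta_j^-\le \Delta_j^+<\infty$ ($j=1,\dots,m$), let $\mathcal{D}$ be the set of diagonal matrices $\Delta=\mathrm{diag}(\Delta_1,\dots,\Delta_m)$ with $\Delta_j^-\le\Delta_j\le\Delta_j^+$ for all $j$. Let $J_2,J_4\in\mathbb{R}^{n\times n}$ be symmetric. Standing assumptions: (A1) for every $\Delta\in\mathcal{D}$, the matrix $B\Delta C$ is singular and has $n-1$ eigenvalues (counted with multiplicity) with negative real part (so $0$ is a simple eigenvalue), and there is a nonzero vector $v\ge 0$ with $v^\top B=0$; (A2) $J_2$ is indefinite, $J_4$ is negative semidefinite, and there exists $\bar\kappa$ such that $\bar\kappa^2 J_2+\bar\kappa^4 J_4$ is negative definite. For real $\kappa\ge 0$ and $\Delta\in\mathcal{D}$ set $J(\Delta,\kappa)=B\Delta C+\kappa^2 J_2+\kappa^4 J_4$ and let $\rho(\Delta,\kappa)$ be its spectral abscissa (the maximum real part of its eigenvalues). Define $\Psi^-(\kappa)=\min_{\Delta\in\mathcal{D}}\det[-J(\Delta,\kappa)]$ and $\Psi^+(\kappa)=\max_{\Delta\in\mathcal{D}}\det[-J(\Delta,\kappa)]$.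 A continuous function $f$ on $[0,\infty)$ is initially positive (resp. negative) if there is $\hat\kappa>0$ with $f>0$ (resp. $f<0$) on $(0,\hat\kappa)$; it has a negative sign change if $f(\kappa_1)>0>f(\kappa_2)$ for some $\kappa_1<\kappa_2$, and a positive sign change if $f(\kappa_1)<0<f(\kappa_2)$ for some $\kappa_1<\kappa_2$. For a given $\Delta\in\mathcal{D}$, the system exhibits microphase separation (MS) if there exists $\hat\kappa>0$ with $\rho(\Delta,\kappa)<0$ for all $\kappa\in(0,\hat\kappa)$, and there exist $\hat\kappa<\kappa_1<\kappa_2$ with $\rho(\Delta,\kappa_1)>0$ and $\rho(\Delta,\kappa_2)<0$. The system exhibits robust MS if it exhibits MS for every $\Delta\in\mathcal{D}$. *)

theory Defs
  imports "HOL-Analysis.Analysis" "HOL-Computational_Algebra.Polynomial"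
begin

definition diag_mat :: "real ^'m \<Rightarrow> real ^'m ^'m" where
  "diag_mat d = (\<chi> i j. if i = j then d $ i else 0)"

definition Dset :: "real ^'m \<Rightarrow> real ^'m \<Rightarrow> (real ^'m) set" where
  "Dset lo hi = {d. \<forall>j. lo $ j \<le> d $ j \<and> d $ j \<le> hi $ j}"

definition charpoly :: "real ^'n ^'n \<Rightarrow> complex poly" where
  "charpoly A = det (\<chi> i j. (if i = j then [:0, 1:] else 0) - [: complex_of_real (A $ i $ j) :])"

definition eigenvalues :: "real ^'n ^'n \<Rightarrow> complex set" where
  "eigenvalues A = {z. poly (charpoly A) z = 0}"

definition spectral_abscissa :: "real ^'n ^'n \<Rightarrow> real" where
  "spectral_abscissa A = Max (Re ` eigenvalues A)"

definition Jmat :: "real ^'m ^'n \<Rightarrow> real ^'n ^'m \<Rightarrow> real ^'n ^'n \<Rightarrow> real ^'n ^'n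
     \<Rightarrow> real ^'m \<Rightarrow> real \<Rightarrow> real ^'n ^'n" where
  "Jmat B C J2 J4 d \<kappa> = B ** diag_mat d ** C + (\<kappa>^2) *\<^sub>R J2 + (\<kappa>^4) *\<^sub>R J4"

definition rho :: "real ^'m ^'n \<Rightarrow> real ^'n ^'m \<Rightarrow> real ^'n ^'n \<Rightarrow> real ^'n ^'n
     \<Rightarrow> real ^'m \<Rightarrow> real \<Rightarrow> real" where
  "rho B C J2 J4 d \<kappa> = spectral_abscissa (Jmat B C J2 J4 d \<kappa>)"

definition Psi_plus :: "real ^'m ^'n \<Rightarrow> real ^'n ^'m \<Rightarrow> real ^'n ^'n \<Rightarrow> real ^'n ^'n
     \<Rightarrow> real ^'m \<Rightarrow> real ^'m \<Rightarrow> real \<Rightarrow> real" where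
  "Psi_plus B C J2 J4 lo hi \<kappa> = (SUP d \<in> Dset lo hi. det (- Jmat B C J2 J4 d \<kappa>))"

definition exhibits_MS :: "real ^'m ^'n \<Rightarrow> real ^'n ^'m \<Rightarrow> real ^'n ^'n \<Rightarrow> real ^'n ^'n
     \<Rightarrow> real ^'m \<Rightarrow> bool" where
  "exhibits_MS B C J2 J4 d \<longleftrightarrow>
     (\<exists>\<kappa>h>0. (\<forall>\<kappa>\<in>{0<..<\<kappa>h}. rho B C J2 J4 d \<kappa> < 0) \<and>
        (\<exists>\<kappa>1 \<kappa>2. \<kappa>h < \<kappa>1 \<and> \<kappa>1 < \<kappa>2 \<and> rho B C J2 J4 d \<kappa>1 > 0 \<and> rho B C J2 J4 d \<kappa>2 < 0))"

definition initially_positive :: "(real \<Rightarrow> real) \<Rightarrow> bool" where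
  "initially_positive f \<longleftrightarrow> (\<exists>\<kappa>h>0. \<forall>\<kappa>\<in>{0<..<\<kappa>h}. f \<kappa> > 0)"

definition symmetric_mat :: "real ^'n ^'n \<Rightarrow> bool" where
  "symmetric_mat A \<longleftrightarrow> transpose A = A"

definition indefinite :: "real ^'n ^'n \<Rightarrow> bool" where
  "indefinite A \<longleftrightarrow> (\<exists>x. x \<bullet> (A *v x) > 0) \<and> (\<exists>y. y \<bullet> (A *v y) < 0)"

definition neg_semidef :: "real ^'n ^'n \<Rightarrow> bool" where
  "neg_semidef A \<longleftrightarrow> (\<forall>x. x \<bullet> (A *v x) \<le> 0)"

definition neg_def :: "real ^'n ^'n \<Rightarrow> bool" where
  "neg_def A \<longleftrightarrow> (\<forall>x. x \<noteq> 0 \<longrightarrow> x \<bullet> (A *v x) < 0)"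

end

theory Submission
  imports Defs
begin

text \<open>If every eigenvalue of A has negative real part, then det(-A) > 0: the real function
  x \<mapsto> det(x I - A) is positive for large x and has no zero on [0, \<infinity>), since such a zero
  would be a real eigenvalue; by the intermediate value theorem it is positive at x = 0.
  Microphase separation for some \<Delta> makes \<rho>(\<Delta>, \<kappa>) negative for all small \<kappa> > 0, so
  det(-J(\<Delta>, \<kappa>)) > 0 there, and \<Psi>+(\<kappa>) dominates this value because it is the supremum of a
  continuous function over a compact box.\<close>

lemma continuous_on_det:
  fixes F :: "'a::topological_space \<Rightarrow> real^'n^'n"
  assumes "\<And>i j. continuous_on S (\<lambda>x. F x $ i $ j)"
  shows "continuous_on S (\<lambda>x. det (F x))"
  unfolding det_def by (intro continuous_intros assms)

lemma det_scaleR: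
  fixes M :: "real^'n^'n"
  shows "det (c *\<^sub>R M) = c ^ CARD('n) * det M"
  unfolding det_def
  by (simp add: sum_distrib_left prod.distrib prod_constant algebra_simps)

lemma poly_charpoly_of_real:
  fixes A :: "real^'n^'n"
  shows "poly (charpoly A) (complex_of_real x) = complex_of_real (det (x *\<^sub>R mat 1 - A))"
proof -
  have "x *\<^sub>R mat 1 - A = (\<chi> i j. (if i = j then x else 0) - A$i$j)"
    by (simp add: vec_eq_iff mat_def)
  then show ?thesis
    unfolding charpoly_def det_def
    by (simp add: poly_sum poly_prod of_real_sum of_real_prod if_distrib[of "\<lambda>p. poly p _"]
        if_distrib[of complex_of_real] cong: if_cong)
qed

lemma ex_det_shift_pos:
  fixes A :: "real^'n^'n"
  obtains x where "x > 0" "det (x *\<^sub>R mat 1 - A) > 0"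
proof -
  define h where "h t = det (mat 1 - t *\<^sub>R A)" for t
  have "continuous_on UNIV h"
    unfolding h_def by (intro continuous_on_det) (auto intro!: continuous_intros)
  then have "(h \<longlongrightarrow> h 0) (at_right 0)"
    by (simp add: continuous_on_def filterlim_at_split)
  moreover have "h 0 = 1"
    by (simp add: h_def)
  ultimately have "eventually (\<lambda>t. t > 0 \<and> h t > 0) (at_right 0)"
    by (intro eventually_conj eventually_at_right_less order_tendstoD) auto
  then obtain t where t: "t > 0" "h t > 0"
    using eventually_happens' trivial_limit_at_right_real by blast
  have "(1 / t) *\<^sub>R mat 1 - A = (1 / t) *\<^sub>R (mat 1 - t *\<^sub>R A)"
    using t by (simp add: algebra_simps)
  then have "det ((1 / t) *\<^sub>R mat 1 - A) = (1 / t) ^ CARD('n) * h t"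
    by (simp add: h_def det_scaleR)
  then show thesis
    using t by (intro that[of "1 / t"]) auto
qed

lemma charpoly_nonzero: "charpoly (A :: real^'n^'n) \<noteq> 0"
proof
  assume "charpoly A = 0"
  obtain x where "det (x *\<^sub>R mat 1 - A) > 0"
    using ex_det_shift_pos by blast
  with \<open>charpoly A = 0\<close> show False
    using poly_charpoly_of_real[of A x] by simp
qed

lemma finite_eigenvalues: "finite (eigenvalues (A :: real^'n^'n))"
  unfolding eigenvalues_def by (rule poly_roots_finite[OF charpoly_nonzero])

lemma le_spectral_abscissa_if_det_shift_eq_0:
  fixes A :: "real^'n^'n"
  assumes "det (x *\<^sub>R mat 1 - A) = 0"
  shows "x \<le> spectral_abscissa A"
proof -
  have "complex_of_real x \<in> eigenvalues A"
    using assms by (simp add: eigenvalues_def poly_charpoly_of_real)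
  then have "Re (complex_of_real x) \<in> Re ` eigenvalues A"
    by (rule imageI)
  then show ?thesis
    unfolding spectral_abscissa_def by (intro Max_ge finite_imageI finite_eigenvalues) simp
qed

lemma det_uminus_pos_if_spectral_abscissa_neg:
  fixes A :: "real^'n^'n"
  assumes "spectral_abscissa A < 0"
  shows "det (- A) > 0"
proof (rule ccontr)
  define f where "f x = det (x *\<^sub>R mat 1 - A)" for x
  obtain X where X: "X > 0" "f X > 0"
    unfolding f_def using ex_det_shift_pos by blast
  have "continuous_on {0..X} f"
    unfolding f_def by (intro continuous_on_det) (auto intro!: continuous_intros)
  moreover assume "\<not> det (- A) > 0"
  then have "f 0 \<le> 0"
    by (simp add: f_def)
  ultimately obtain x where "0 \<le> x" "f x = 0"
    using IVT'[of f 0 0 X] X by fastforce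
  then show False
    using le_spectral_abscissa_if_det_shift_eq_0[of x A] assms by (simp add: f_def)
qed

lemma Dset_eq_cbox: "Dset lo hi = cbox lo hi"
  unfolding Dset_def by (auto simp: mem_box_cart)

lemma matrix_mult_diag_mat_nth:
  "(B ** diag_mat d ** C) $ i $ j = (\<Sum>k\<in>UNIV. B$i$k * d$k * C$k$j)"
  by (simp add: matrix_matrix_mult_def diag_mat_def if_distrib[of "\<lambda>x. _ * x"]
      sum.distrib sum_distrib_right cong: if_cong)

lemma continuous_on_det_uminus_Jmat:
  "continuous_on S (\<lambda>d. det (- Jmat B C J2 J4 d \<kappa>))"
  by (intro continuous_on_det)
    (simp add: Jmat_def matrix_mult_diag_mat_nth, intro continuous_intros)

lemma det_uminus_Jmat_le_Psi_plus:
  assumes "d \<in> Dset lo hi"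
  shows "det (- Jmat B C J2 J4 d \<kappa>) \<le> Psi_plus B C J2 J4 lo hi \<kappa>"
proof -
  have "compact ((\<lambda>d. det (- Jmat B C J2 J4 d \<kappa>)) ` Dset lo hi)"
    unfolding Dset_eq_cbox
    by (intro compact_continuous_image continuous_on_det_uminus_Jmat compact_cbox)
  then have "bdd_above ((\<lambda>d. det (- Jmat B C J2 J4 d \<kappa>)) ` Dset lo hi)"
    by (intro bounded_imp_bdd_above compact_imp_bounded)
  then show ?thesis
    unfolding Psi_plus_def by (rule cSUP_upper[OF assms])
qed

theorem theorem1:
  fixes B :: "real ^'m ^'n" and C :: "real ^'n ^'m"
    and lo hi :: "real ^'m" and J2 J4 :: "real ^'n ^'n"
  assumes B_int: "\<forall>i j. B $ i $ j \<in> \<int>"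
    and C_int: "\<forall>i j. C $ i $ j \<in> \<int>"
    and bounds: "\<forall>j. 0 \<le> lo $ j \<and> lo $ j \<le> hi $ j"
    and A1_sing: "\<forall>d\<in>Dset lo hi. det (B ** diag_mat d ** C) = 0"
    and A1_stable: "\<forall>d\<in>Dset lo hi.
        (\<Sum>z\<in>{z\<in>eigenvalues (B ** diag_mat d ** C). Re z < 0}.
            order z (charpoly (B ** diag_mat d ** C))) = CARD('n) - 1"
    and A1_v: "\<exists>v::real^'n. v \<noteq> 0 \<and> (\<forall>i. 0 \<le> v $ i) \<and> v v* B = 0"
    and J2_sym: "symmetric_mat J2" and J4_sym: "symmetric_mat J4"
    and A2_J2: "indefinite J2"
    and A2_J4: "neg_semidef J4"
    and A2_kbar: "\<exists>\<kappa>b::real. neg_def ((\<kappa>b^2) *\<^sub>R J2 + (\<kappa>b^4) *\<^sub>R J4)"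
    and MS: "\<exists>d\<in>Dset lo hi. exhibits_MS B C J2 J4 d"
  shows "initially_positive (Psi_plus B C J2 J4 lo hi)"
proof -
  obtain d \<kappa>h where d: "d \<in> Dset lo hi" and "\<kappa>h > 0"
    and stable: "\<And>\<kappa>. \<kappa> \<in> {0<..<\<kappa>h} \<Longrightarrow> rho B C J2 J4 d \<kappa> < 0"
    using MS unfolding exhibits_MS_def by blast
  have "Psi_plus B C J2 J4 lo hi \<kappa> > 0" if "\<kappa> \<in> {0<..<\<kappa>h}" for \<kappa>
  proof -
    have "0 < det (- Jmat B C J2 J4 d \<kappa>)"
      using stable[OF that] by (intro det_uminus_pos_if_spectral_abscissa_neg) (simp add: rho_def)
    also have "\<dots> \<le> Psi_plus B C J2 J4 lo hi \<kappa>"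
      using d by (rule det_uminus_Jmat_le_Psi_plus)
    finally show ?thesis .
  qed
  with \<open>\<kappa>h > 0\<close> show ?thesis
    unfolding initially_positive_def by blast
qed

end
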